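(* Let $\epsilon=\epsilon_1\cdots\epsilon_n$ be the reversal of an inversion sequence (equivalently, an integer sequence with $0\le\epsilon_i\le n-i$ for all $i$), and let $\epsilon'$ be the sequence obtained by applying Algorithm A (described below) to $\epsilon$. Then $\epsilon'$ is also the reversal of an inversion sequence.
   Context: An inversion sequence of length $n$ is an integer sequence $\epsilon_1\cdots\epsilon_n$ with $0\le\epsilon_i<i$ for all $i$; its reversal is $\epsilon_n\cdots\epsilon_1$. The reduction of an integer word replaces each occurrence of its $k$-th smallest distinct value by $k-1$; a consecutive pattern $\underline{p_1p_2p_3p_4}$ occurs in a sequence at position $i$ if the reduction of its entries in positions $i,\dots,i+3$ equals $p_1p_2p_3p_4$. Let $p=\underline{0102}$ and $q=\underline{0112}$. Algorithm A, on input an integer sequence $\mathrm{seq}=\epsilon_1\cdots\epsilon_n$: let $E_p$, $E_q$ be the sets of positions of occurrences of $p$, resp. $q$, in the input sequence; set $\mathrm{last}:=$ null. For $i=1,2,\dots,n$ in order: let $N_p,N_q$ be the sets of positions of occurrences of $p$, resp. $q$, in the current sequence. If $i-2\in E_p$: set $\mathrm{last}:=\mathrm{seq}[i]$ and $\mathrm{seq}[i]:=\mathrm{seq}[i-1]$. Else if $i-2\in E_q$: set $\mathrm{last}:=\mathrm{seq}[i]$ and $\mathrm{seq}[i]:=\mathrm{seq}[i-2]$. Else if $i-2\in N_p$ or $i-2\in N_q$: swap the values of $\mathrm{seq}[i]$ and $\mathrm{last}$. Output $\mathrm{seq}$. *)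

theory Defs
  imports Main
begin

(* Sequences are lists; position i (1-based, as in the paper) is entry  xs ! (i - 1). *)

definition reduction :: "'a::linorder list \<Rightarrow> nat list" where
  "reduction w = map (\<lambda>x. card {y \<in> set w. y < x}) w"

definition occurs_at :: "nat list \<Rightarrow> 'a::linorder list \<Rightarrow> nat \<Rightarrow> bool" where
  "occurs_at pat w i \<longleftrightarrow> 1 \<le> i \<and> i + 3 \<le> length w \<and> reduction (take 4 (drop (i - 1) w)) = pat"

definition pat_p :: "nat list" where "pat_p = [0,1,0,2]"
definition pat_q :: "nat list" where "pat_q = [0,1,1,2]"

(* One iteration (index i) of Algorithm A. orig is the input sequence (used for E_p, E_q);
   the state is (current sequence, last), last = None meaning null. *)
definition stepA :: "'a::linorder list \<Rightarrow> 'a list \<times> 'a option \<Rightarrow> nat \<Rightarrow> 'a list \<times> 'a option" where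
  "stepA orig st i =
     (let s = fst st; last = snd st in
      if occurs_at pat_p orig (i - 2) then (s[i - 1 := s ! (i - 2)], Some (s ! (i - 1)))
      else if occurs_at pat_q orig (i - 2) then (s[i - 1 := s ! (i - 3)], Some (s ! (i - 1)))
      else if occurs_at pat_p s (i - 2) \<or> occurs_at pat_q s (i - 2) then
        (case last of Some v \<Rightarrow> (s[i - 1 := v], Some (s ! (i - 1))) | None \<Rightarrow> (s, last))
      else (s, last))"

definition algA :: "'a::linorder list \<Rightarrow> 'a list" where
  "algA xs = fst (foldl (stepA xs) (xs, None) [1..<length xs + 1])"

definition inversion_seq :: "nat list \<Rightarrow> bool" where
  "inversion_seq e \<longleftrightarrow> (\<forall>i<length e. e ! i < i + 1)"

definition rev_inversion_seq :: "nat list \<Rightarrow> bool" where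
  "rev_inversion_seq e \<longleftrightarrow> inversion_seq (rev e)"

end

theory Submission
  imports Defs
begin

(* In both patterns 0102 and 0112 the last entry is the strict maximum of the window. Hence every
   value that Algorithm A writes at a position i is smaller than the input entry at position i + 1,
   and every output entry is at most the input entry at its own position or smaller than the one at
   the next position; for a reversed inversion sequence (entry i at most n - i) both bounds give
   entry i of the output at most n - i.
   For a value taken from last this needs an argument: last always lies below an input entry that is
   still untouched, as is everything after it. If that entry lay before the current window, the whole
   window would be untouched, and a pattern in the current sequence would already be one of the
   input, a case handled by the first two branches. *)

lemma reduction_nth_less_imp_less:
  fixes w :: "'a::linorder list"
  assumes "i < length w" "j < length w" and "reduction w ! i < reduction w ! j"
  shows "w ! i < w ! j"
proof (rule ccontr)
  assume "\<not> w ! i < w ! j"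
  then have "{y \<in> set w. y < w ! j} \<subseteq> {y \<in> set w. y < w ! i}"
    by auto
  then have "card {y \<in> set w. y < w ! j} \<le> card {y \<in> set w. y < w ! i}"
    by (intro card_mono) auto
  with assms show False
    by (simp add: reduction_def)
qed

lemma not_occurs_at_0 [simp]: "\<not> occurs_at pat w 0"
  by (simp add: occurs_at_def)

lemma occurs_at_Suc_iff:
  "occurs_at pat w (Suc m) \<longleftrightarrow>
     m + 4 \<le> length w \<and> reduction [w ! m, w ! (m + 1), w ! (m + 2), w ! (m + 3)] = pat"
proof -
  have "take 4 (drop m w) = [w ! m, w ! (m + 1), w ! (m + 2), w ! (m + 3)]" if "m + 4 \<le> length w"
    using that by (simp add: take_Suc_conv_app_nth numeral_eq_Suc)
  then show ?thesis
    by (auto simp: occurs_at_def)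
qed

lemma occurs_at_Suc_cong:
  assumes "length v = length w" and "\<And>t. m \<le> t \<Longrightarrow> t \<le> m + 3 \<Longrightarrow> v ! t = w ! t"
  shows "occurs_at pat v (Suc m) \<longleftrightarrow> occurs_at pat w (Suc m)"
  using assms by (simp add: occurs_at_Suc_iff)

lemma occurs_at_pat_p_or_q_peak:
  fixes w :: "'a::linorder list"
  assumes "occurs_at pat_p w (Suc m) \<or> occurs_at pat_q w (Suc m)"
  shows "m + 3 < length w \<and>
    w ! m < w ! (m + 3) \<and> w ! (m + 1) < w ! (m + 3) \<and> w ! (m + 2) < w ! (m + 3)"
proof -
  let ?win = "[w ! m, w ! (m + 1), w ! (m + 2), w ! (m + 3)]"
  from assms have len: "m + 3 < length w" and red: "reduction ?win \<in> {pat_p, pat_q}"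
    by (auto simp: occurs_at_Suc_iff)
  have "reduction ?win ! 0 < reduction ?win ! 3" "reduction ?win ! 1 < reduction ?win ! 3"
    "reduction ?win ! 2 < reduction ?win ! 3"
    using red by (auto simp: pat_p_def pat_q_def)
  then have "?win ! 0 < ?win ! 3" "?win ! 1 < ?win ! 3" "?win ! 2 < ?win ! 3"
    by (simp_all only: reduction_nth_less_imp_less[of _ ?win 3] length_Cons list.size)
  with len show ?thesis
    by simp
qed

definition agrees_from :: "'a list \<Rightarrow> 'a list \<Rightarrow> nat \<Rightarrow> bool" where
  "agrees_from xs s k \<longleftrightarrow> (\<forall>t. k \<le> t \<longrightarrow> t < length xs \<longrightarrow> s ! t = xs ! t)"

definition dominated_by :: "'a::linorder list \<Rightarrow> 'a list \<Rightarrow> bool" where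
  "dominated_by xs s \<longleftrightarrow>
     (\<forall>t < length xs. s ! t \<le> xs ! t \<or> (Suc t < length xs \<and> s ! t < xs ! Suc t))"

definition algA_inv :: "'a::linorder list \<Rightarrow> nat \<Rightarrow> 'a list \<times> 'a option \<Rightarrow> bool" where
  "algA_inv xs j st \<longleftrightarrow>
     length (fst st) = length xs \<and> agrees_from xs (fst st) j \<and> dominated_by xs (fst st) \<and>
     (\<forall>v. snd st = Some v \<longrightarrow> (\<exists>k \<le> j. v < xs ! k \<and> agrees_from xs (fst st) k))"

lemma dominated_by_nth_less:
  assumes "dominated_by xs s" "t < length xs" "xs ! t < c" "Suc t < length xs \<Longrightarrow> xs ! Suc t < c"
  shows "s ! t < c"
  using assms unfolding dominated_by_def by force

lemma agrees_from_mono: "agrees_from xs s k \<Longrightarrow> k \<le> k' \<Longrightarrow> agrees_from xs s k'"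
  by (simp add: agrees_from_def)

lemma algA_inv_update:
  assumes inv: "algA_inv xs j (s, l)"
    and j: "Suc j < length xs" and x: "x < xs ! Suc j" and peak: "xs ! j < xs ! Suc j"
  shows "algA_inv xs (Suc j) (s[j := x], Some (s ! j))"
proof -
  from inv have len: "length s = length xs" and agree: "agrees_from xs s j"
    and dom: "dominated_by xs s"
    by (simp_all add: algA_inv_def)
  have agree': "agrees_from xs (s[j := x]) (Suc j)"
    using agree by (simp add: agrees_from_def)
  have "dominated_by xs (s[j := x])"
    using dom len j x by (auto simp: dominated_by_def nth_list_update)
  moreover have "s ! j < xs ! Suc j"
    using agree j peak by (simp add: agrees_from_def)
  ultimately show ?thesis
    using len agree' by (auto simp: algA_inv_def)
qed

lemma algA_inv_unchanged:
  assumes "algA_inv xs j (s, l)"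
  shows "algA_inv xs (Suc j) (s, l)"
proof -
  have "\<exists>k \<le> Suc j. P k" if "\<exists>k \<le> j. P k" for P
    using that le_SucI by blast
  with assms show ?thesis
    by (simp add: algA_inv_def agrees_from_mono[of xs s j "Suc j"])
qed

lemma stepA_less_3: "i < 3 \<Longrightarrow> stepA xs (s, l) i = (s, l)"
  by (simp add: stepA_def)

lemma stepA_add_3:
  "stepA xs (s, l) (m + 3) =
     (if occurs_at pat_p xs (Suc m) then (s[m + 2 := s ! (m + 1)], Some (s ! (m + 2)))
      else if occurs_at pat_q xs (Suc m) then (s[m + 2 := s ! m], Some (s ! (m + 2)))
      else if occurs_at pat_p s (Suc m) \<or> occurs_at pat_q s (Suc m) then
        (case l of Some v \<Rightarrow> (s[m + 2 := v], Some (s ! (m + 2))) | None \<Rightarrow> (s, l))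
      else (s, l))"
  by (cases l) (simp_all add: stepA_def numeral_eq_Suc)

lemma dominated_by_less_peak:
  assumes "dominated_by xs s" and "occurs_at pat_p xs (Suc m) \<or> occurs_at pat_q xs (Suc m)"
    and "t = m \<or> t = m + 1"
  shows "s ! t < xs ! (m + 3)"
  using assms(3) occurs_at_pat_p_or_q_peak[OF assms(2)]
  by (intro dominated_by_nth_less[OF assms(1)]) auto

lemma algA_inv_last_less_peak:
  assumes inv: "algA_inv xs (m + 2) (s, Some v)"
    and not_xs: "\<not> occurs_at pat_p xs (Suc m)" "\<not> occurs_at pat_q xs (Suc m)"
    and occ_s: "occurs_at pat_p s (Suc m) \<or> occurs_at pat_q s (Suc m)"
  shows "v < xs ! (m + 3)"
proof -
  from inv have len: "length s = length xs" and agree: "agrees_from xs s (m + 2)"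
    and "\<exists>k \<le> m + 2. v < xs ! k \<and> agrees_from xs s k"
    by (simp_all add: algA_inv_def)
  then obtain k where k: "k \<le> m + 2" "v < xs ! k" "agrees_from xs s k"
    by blast
  from occurs_at_pat_p_or_q_peak[OF occ_s] len have peak: "m + 3 < length xs"
    "s ! (m + 1) < s ! (m + 3)" "s ! (m + 2) < s ! (m + 3)"
    by auto
  with agree have top: "s ! (m + 2) = xs ! (m + 2)" "s ! (m + 3) = xs ! (m + 3)"
    by (simp_all add: agrees_from_def)
  have "m < k"
  proof (rule ccontr)
    assume "\<not> m < k"
    with k(3) peak(1) have "occurs_at pat s (Suc m) \<longleftrightarrow> occurs_at pat xs (Suc m)" for pat
      by (intro occurs_at_Suc_cong) (auto simp: len agrees_from_def)
    with not_xs occ_s show False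
      by simp
  qed
  with k peak top show ?thesis
    by (auto simp: agrees_from_def le_Suc_eq numeral_eq_Suc)
qed

lemma stepA_cases:
  fixes xs :: "'a::linorder list"
  assumes inv: "algA_inv xs j (s, l)"
  obtains (unchanged) "stepA xs (s, l) (Suc j) = (s, l)"
  | (update) x where "stepA xs (s, l) (Suc j) = (s[j := x], Some (s ! j))"
      "Suc j < length xs" "x < xs ! Suc j" "xs ! j < xs ! Suc j"
proof (cases "j < 2")
  case True
  then show ?thesis
    by (intro unchanged stepA_less_3) simp
next
  case False
  then obtain m where j: "j = m + 2"
    by (metis add.commute le_Suc_ex not_less)
  then have "Suc j = m + 3"
    by simp
  note unchanged' = unchanged[unfolded this] and update' = update[unfolded this, unfolded j]
  consider (xs_p) "occurs_at pat_p xs (Suc m)"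
    | (xs_q) "\<not> occurs_at pat_p xs (Suc m)" "occurs_at pat_q xs (Suc m)"
    | (s_pq) v where "\<not> occurs_at pat_p xs (Suc m)" "\<not> occurs_at pat_q xs (Suc m)"
        "occurs_at pat_p s (Suc m) \<or> occurs_at pat_q s (Suc m)" "l = Some v"
    | (none) "\<not> occurs_at pat_p xs (Suc m)" "\<not> occurs_at pat_q xs (Suc m)"
        "\<not> (occurs_at pat_p s (Suc m) \<or> occurs_at pat_q s (Suc m)) \<or> l = None"
    by (cases l) auto
  then show ?thesis
  proof cases
    case xs_p
    with inv show ?thesis
      using occurs_at_pat_p_or_q_peak[of xs m] dominated_by_less_peak[of xs s m "m + 1"]
      by (intro update'[where x = "s ! (m + 1)"]) (auto simp: stepA_add_3 algA_inv_def)
  next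
    case xs_q
    with inv show ?thesis
      using occurs_at_pat_p_or_q_peak[of xs m] dominated_by_less_peak[of xs s m m]
      by (intro update'[where x = "s ! m"]) (auto simp: stepA_add_3 algA_inv_def)
  next
    case s_pq
    with inv have "v < xs ! (m + 3)"
      by (intro algA_inv_last_less_peak) (simp_all add: j)
    moreover from s_pq have "m + 3 < length s" "s ! (m + 2) < s ! (m + 3)"
      using occurs_at_pat_p_or_q_peak by blast+
    moreover from inv have "length s = length xs" "agrees_from xs s (m + 2)"
      by (simp_all add: algA_inv_def j)
    ultimately show ?thesis
      using s_pq by (intro update'[where x = v]) (auto simp: stepA_add_3 agrees_from_def)
  next
    case none
    then show ?thesis
      by (intro unchanged') (auto simp: stepA_add_3)
  qed
qed

lemma algA_inv_stepA:
  assumes "algA_inv xs j st"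
  shows "algA_inv xs (Suc j) (stepA xs st (Suc j))"
proof -
  obtain s l where st: "st = (s, l)"
    by fastforce
  from assms have inv: "algA_inv xs j (s, l)"
    by (simp add: st)
  then show ?thesis
  proof (cases rule: stepA_cases)
    case unchanged
    with inv show ?thesis
      by (simp add: st algA_inv_unchanged)
  next
    case (update x)
    with inv show ?thesis
      by (simp add: st algA_inv_update)
  qed
qed

lemma algA_inv_foldl: "algA_inv xs j (foldl (stepA xs) (xs, None) [1..<Suc j])"
proof (induction j)
  case 0
  show ?case
    by (simp add: algA_inv_def agrees_from_def dominated_by_def)
next
  case (Suc j)
  then show ?case
    using algA_inv_stepA by fastforce
qed

theorem algA_dominated_by: "length (algA xs) = length xs \<and> dominated_by xs (algA xs)"
  using algA_inv_foldl[of xs "length xs"] by (simp add: algA_def algA_inv_def)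

lemma rev_inversion_seq_iff: "rev_inversion_seq e \<longleftrightarrow> (\<forall>t < length e. e ! t + t < length e)"
proof -
  have "(\<forall>i < length e. rev e ! i < Suc i) \<longleftrightarrow> (\<forall>t < length e. e ! t + t < length e)"
  proof (intro iffI allI impI)
    fix t assume "\<forall>i < length e. rev e ! i < Suc i" "t < length e"
    then show "e ! t + t < length e"
      by (auto dest!: spec[of _ "length e - Suc t"] simp: rev_nth)
  next
    fix i assume "\<forall>t < length e. e ! t + t < length e" "i < length e"
    then show "rev e ! i < Suc i"
      by (auto dest!: spec[of _ "length e - Suc i"] simp: rev_nth)
  qed
  then show ?thesis
    by (simp add: rev_inversion_seq_def inversion_seq_def)
qed

theorem corollary2:
  fixes e :: "nat list"
  assumes "rev_inversion_seq e"
  shows "rev_inversion_seq (algA e)"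
proof -
  have bound: "e ! t + t < length e" if "t < length e" for t
    using assms that by (simp add: rev_inversion_seq_iff)
  have "algA e ! t + t < length e" if "t < length e" for t
  proof -
    from algA_dominated_by[of e] that
    have "algA e ! t \<le> e ! t \<or> (Suc t < length e \<and> algA e ! t < e ! Suc t)"
      by (simp add: dominated_by_def)
    with bound[OF that] bound[of "Suc t"] show ?thesis
      by auto
  qed
  then show ?thesis
    by (simp add: rev_inversion_seq_iff algA_dominated_by)
qed

end
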